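(* Let $h,k,m$ be integers with $h\ge1$, $k\ge1$, $\gcd(h,k)=1$, $1\le m\le d=h+k$. Then $\det A_m(h,k)=(-1)^{(d-1)(m-1)}\left[\frac{k}{d}\right]$. In particular $\det K(h,k)=\left[\frac{k}{d}\right]$.
   Context: For $h,k\ge1$ coprime and $d=h+k$, $A_m(h,k)$ ($1\le m\le d$) is the $d\times d$ permutation matrix with $(i,j)$ entry $1$ if $j=\sigma(i)$ and $0$ otherwise, where $\sigma(i)\in\{1,\dots,d\}$ is determined by $\sigma(i)\equiv ki+m-k\pmod d$. The $(d,d)$ entry of $A_k(h,k)$ is $1$, and $K(h,k)$ is the $(d-1)\times(d-1)$ upper-left block of $A_k(h,k)$ (so $A_k(h,k)=\begin{pmatrix}K(h,k)&0\\0&1\end{pmatrix}$). For integers $d\ge1$, $k$ with $\gcd(d,k)=1$, $\left[\frac{k}{d}\right]$ denotes the signature of the permutation $x\mapsto kx$ of $\mathbb{Z}/d\mathbb{Z}$. *)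

theory Defs
  imports "Jordan_Normal_Form.Determinant" "HOL-Combinatorics.Permutations"
begin

text \<open>sigma for A_m(h,k), with 1-based indices i in {1..d}, d = h+k:
  sigma(i) is the unique element of {1..d} congruent to k*i + m - k mod d.\<close>
definition sigma_hk :: "nat \<Rightarrow> nat \<Rightarrow> nat \<Rightarrow> int \<Rightarrow> int" where
  "sigma_hk h k m i = ((int k * i + int m - int k - 1) mod int (h + k)) + 1"

text \<open>A_m(h,k) as a d x d integer matrix; Isabelle's matrices are 0-indexed,
  so entry (i,j) here corresponds to the paper's entry (i+1,j+1).\<close>
definition A_mat :: "nat \<Rightarrow> nat \<Rightarrow> nat \<Rightarrow> int mat" where
  "A_mat m h k = mat (h + k) (h + k)
     (\<lambda>(i, j). if int j + 1 = sigma_hk h k m (int i + 1) then 1 else 0)"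

definition K_mat :: "nat \<Rightarrow> nat \<Rightarrow> int mat" where
  "K_mat h k = mat (h + k - 1) (h + k - 1) (\<lambda>(i, j). A_mat k h k $$ (i, j))"

text \<open>[k/d]: signature of the permutation x \<mapsto> k x of Z/dZ, realised on the
  representatives {0..<d} (extended by the identity outside).\<close>
definition jac_sym :: "nat \<Rightarrow> nat \<Rightarrow> int" where
  "jac_sym k d = sign (\<lambda>x::nat. if x < d then (k * x) mod d else x)"

end

theory Submission
  imports Defs "HOL-Number_Theory.Cong"
begin

text \<open>Indexing from 0, \<open>A\<^sub>m(h,k)\<close> is the permutation matrix of the affine map
  \<open>x \<mapsto> k x + (m - 1)\<close> of \<open>\<int>/d\<int>\<close>: multiplication by \<open>k\<close>, of sign \<open>[k/d]\<close>,
  followed by the \<open>(m - 1)\<close>-th power of the \<open>d\<close>-cycle \<open>x \<mapsto> x + 1\<close>, of sign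
  \<open>(-1)^(d - 1)\<close>. For \<open>m = k\<close> the map fixes \<open>-1\<close>, the last index, so \<open>K(h,k)\<close> is
  the permutation matrix of its restriction; its sign \<open>(-1)^((d - 1)(k - 1))\<close> is \<open>1\<close>
  because \<open>h\<close> and \<open>k\<close> are not both even.\<close>

lemma det_permutation_mat:
  assumes "f permutes {0..<n}"
  shows "det (mat n n (\<lambda>(i, j). if j = f i then 1 else 0) :: 'a :: comm_ring_1 mat)
         = of_int (sign f)"
proof -
  have "mat n n (\<lambda>(i, j). if j = f i then 1 else 0) = mat n n (\<lambda>(i, j). (1\<^sub>m n :: 'a mat) $$ (f i, j))"
    using permutes_in_image[OF assms] by (intro eq_matI) auto
  then show ?thesis
    using det_permute_rows[OF one_carrier_mat assms] by simp
qed

definition affine_perm :: "nat \<Rightarrow> nat \<Rightarrow> nat \<Rightarrow> nat \<Rightarrow> nat" where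
  "affine_perm d k c x = (if x < d then (k * x + c) mod d else x)"

lemma jac_sym_eq_sign_affine_perm: "jac_sym k d = sign (affine_perm d k 0)"
proof -
  have "affine_perm d k 0 = (\<lambda>x. if x < d then (k * x) mod d else x)"
    by (simp add: fun_eq_iff affine_perm_def)
  then show ?thesis by (simp add: jac_sym_def)
qed

lemma affine_perm_permutes:
  assumes "coprime k d"
  shows "affine_perm d k c permutes {0..<d}"
proof (rule bij_imp_permutes)
  have "inj_on (affine_perm d k c) {0..<d}"
  proof (rule inj_onI)
    fix x y assume "x \<in> {0..<d}" "y \<in> {0..<d}" "affine_perm d k c x = affine_perm d k c y"
    then have "[k * x + c = k * y + c] (mod d)"
      by (simp add: affine_perm_def cong_def)
    then have "[x = y] (mod d)"
      using assms by (simp add: cong_add_rcancel_nat cong_mult_lcancel_nat)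
    then show "x = y"
      using \<open>x \<in> {0..<d}\<close> \<open>y \<in> {0..<d}\<close> by (auto intro: cong_less_modulus_unique_nat)
  qed
  moreover have "affine_perm d k c ` {0..<d} \<subseteq> {0..<d}"
    by (auto simp: affine_perm_def)
  ultimately show "bij_betw (affine_perm d k c) {0..<d} {0..<d}"
    by (simp add: bij_betw_def endo_inj_surj)
qed (simp add: affine_perm_def)

lemma affine_perm_Suc: "affine_perm d k (Suc c) = affine_perm d 1 1 \<circ> affine_perm d k c"
  by (auto simp: fun_eq_iff affine_perm_def mod_Suc_eq)

lemma cyclic_shift_Suc:
  assumes "d \<noteq> 0"
  shows "affine_perm (Suc d) 1 1 = transpose 0 d \<circ> affine_perm d 1 1"
proof
  fix x
  consider "Suc x < d" | "Suc x = d" | "x = d" | "x > d" by linarith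
  then show "affine_perm (Suc d) 1 1 x = (transpose 0 d \<circ> affine_perm d 1 1) x"
    by cases (use assms in \<open>auto simp: affine_perm_def transpose_def\<close>)
qed

lemma sign_cyclic_shift: "sign (affine_perm d 1 1) = (-1) ^ (d - 1)"
proof (induction d)
  case 0
  then show ?case by (simp add: affine_perm_def id_def[symmetric])
next
  case (Suc d)
  show ?case
  proof (cases "d = 0")
    case True
    then have "affine_perm (Suc d) 1 1 = id" by (auto simp: affine_perm_def)
    then show ?thesis using True by simp
  next
    case False
    have "permutation (affine_perm d 1 1)"
      by (rule permutes_imp_permutation[OF _ affine_perm_permutes]) simp_all
    then have "sign (affine_perm (Suc d) 1 1) = sign (transpose 0 d) * sign (affine_perm d 1 1)"
      unfolding cyclic_shift_Suc[OF False] by (rule sign_compose[OF permutation_swap_id])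
    then have "sign (affine_perm (Suc d) 1 1) = - sign (affine_perm d 1 1)"
      using False by (simp add: sign_swap_id)
    then show ?thesis
      using Suc.IH False by (cases d) auto
  qed
qed

lemma sign_affine_perm:
  assumes "coprime k d"
  shows "sign (affine_perm d k c) = (-1) ^ ((d - 1) * c) * jac_sym k d"
proof (induction c)
  case 0
  then show ?case by (simp add: jac_sym_eq_sign_affine_perm)
next
  case (Suc c)
  have "permutation (affine_perm d 1 1)" "permutation (affine_perm d k c)"
    by (rule permutes_imp_permutation[OF _ affine_perm_permutes], simp, simp add: assms)+
  then have "sign (affine_perm d k (Suc c)) = sign (affine_perm d 1 1) * sign (affine_perm d k c)"
    unfolding affine_perm_Suc by (rule sign_compose)
  then have "sign (affine_perm d k (Suc c)) = (-1) ^ (d - 1) * sign (affine_perm d k c)"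
    by (simp only: sign_cyclic_shift)
  then show ?case
    using Suc.IH by (simp add: power_add)
qed

lemma sigma_hk_eq_affine_perm:
  assumes "1 \<le> m" "i < h + k"
  shows "sigma_hk h k m (int i + 1) = int (affine_perm (h + k) k (m - 1) i) + 1"
proof -
  have "int k * (int i + 1) + int m - int k - 1 = int (k * i + (m - 1))"
    using assms by (simp add: algebra_simps)
  then show ?thesis
    unfolding sigma_hk_def using assms(2) by (simp add: affine_perm_def zmod_int)
qed

lemma A_mat_eq_permutation_mat:
  assumes "1 \<le> m"
  shows "A_mat m h k
         = mat (h + k) (h + k) (\<lambda>(i, j). if j = affine_perm (h + k) k (m - 1) i then 1 else 0)"
  unfolding A_mat_def
proof (rule cong_mat)
  fix i j assume "i < h + k"
  then show "(\<lambda>(i, j). if int j + 1 = sigma_hk h k m (int i + 1) then 1 else 0) (i, j)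
    = (\<lambda>(i, j). if j = affine_perm (h + k) k (m - 1) i then 1 else (0::int)) (i, j)"
    using sigma_hk_eq_affine_perm[OF assms] by simp
qed simp_all

lemma affine_perm_pred_permutes_butlast:
  assumes "coprime k d" "1 \<le> k"
  shows "affine_perm d k (k - 1) permutes {0..<d - 1}"
proof (rule permutes_superset[OF affine_perm_permutes[OF assms(1)]])
  fix x assume "x \<in> {0..<d} - {0..<d - 1}"
  then have x: "x = d - 1" "1 \<le> d" by auto
  have "k * (d - 1) + (k - 1) = (d - 1) + (k - 1) * d"
    using x(2) assms(2) by (simp add: algebra_simps)
  then have "(k * x + (k - 1)) mod d = x"
    using x by (simp only: mod_mult_self1) simp
  then show "affine_perm d k (k - 1) x = x"
    using x by (simp add: affine_perm_def)
qed

lemma K_mat_eq_permutation_mat: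
  assumes "1 \<le> k"
  shows "K_mat h k
         = mat (h + k - 1) (h + k - 1) (\<lambda>(i, j). if j = affine_perm (h + k) k (k - 1) i then 1 else 0)"
  unfolding K_mat_def A_mat_eq_permutation_mat[OF assms] by (rule cong_mat) auto

lemma coprime_imp_even_pred_add_mult_pred:
  fixes h k :: nat
  assumes "coprime h k"
  shows "even ((h + k - 1) * (k - 1))"
proof (cases "even k")
  case True
  then have "odd h"
    using assms by auto
  with True show ?thesis by simp
qed simp

theorem proposition3:
  fixes h k m :: nat
  assumes "h \<ge> 1" and "k \<ge> 1" and "coprime h k"
    and "1 \<le> m" and "m \<le> h + k"
  shows "det (A_mat m h k) = (-1) ^ ((h + k - 1) * (m - 1)) * jac_sym k (h + k)
         \<and> det (K_mat h k) = jac_sym k (h + k)"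
proof
  define d where "d = h + k"
  have "coprime k d"
    using assms(3) unfolding d_def by (metis add.commute coprime_commute coprime_iff_gcd_eq_1 gcd_add2)
  have "det (A_mat m h k) = sign (affine_perm d k (m - 1))"
    unfolding A_mat_eq_permutation_mat[OF assms(4)] d_def[symmetric]
    using affine_perm_permutes[OF \<open>coprime k d\<close>] by (simp add: det_permutation_mat)
  then show "det (A_mat m h k) = (-1) ^ ((h + k - 1) * (m - 1)) * jac_sym k (h + k)"
    using sign_affine_perm[OF \<open>coprime k d\<close>] by (simp add: d_def)
  have "det (K_mat h k) = sign (affine_perm d k (k - 1))"
    unfolding K_mat_eq_permutation_mat[OF assms(2)] d_def[symmetric]
    using affine_perm_pred_permutes_butlast[OF \<open>coprime k d\<close> assms(2)]
    by (simp add: det_permutation_mat)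
  then show "det (K_mat h k) = jac_sym k (h + k)"
    using sign_affine_perm[OF \<open>coprime k d\<close>] coprime_imp_even_pred_add_mult_pred[OF assms(3)]
    by (simp add: d_def)
qed

end
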